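(* Let $m,d\geq 1$ and let $f:(0,\infty)^m\times\mathbb{R}^d\to\mathbb{R}$, $f=f(t,x)$ with $t=(t^1,\dots,t^m)$, $x=(x^1,\dots,x^d)$, satisfy $f(t,0)=0$, have continuous first-order partial derivatives with respect to each $t^\alpha$ and continuous second-order partial derivatives with respect to the $x^a$. Suppose $f$ is a solution of the forward diffusion-like PDE system $$\frac{\partial f}{\partial t^\alpha}(t,x)-\frac12\,c_\alpha(t)\,\Delta_x f(t,x)=0,\qquad \alpha=1,\dots,m.$$ Then $f$ depends on the point $t=(t^1,\dots,t^m)$ only through the product $v=t^1\cdots t^m$, i.e. there is a function $\varphi$ with $f(t,x)=\varphi(t^1\cdots t^m,x)$; thus $f$ is a function of the volume $v$ of the box $\Omega_{0t}=\prod_{\alpha}[0,t^\alpha]$.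
   Context: Here $c_\alpha(t)=\frac{\partial v}{\partial t^\alpha}=\prod_{\beta\neq\alpha}t^\beta$ where $v=t^1\cdots t^m$, and $\Delta_x f=\sum_{a,b=1}^d\delta^{ab}\frac{\partial^2 f}{\partial x^a\partial x^b}=\sum_{a=1}^d\frac{\partial^2 f}{(\partial x^a)^2}$. *)

theory Defs
  imports "HOL-Analysis.Analysis"
begin

definition vupd :: "real^'n \<Rightarrow> 'n \<Rightarrow> real \<Rightarrow> real^'n" where
  "vupd v i s = (\<chi> j. if j = i then s else v $ j)"

definition cfun :: "'m::finite \<Rightarrow> real^'m \<Rightarrow> real" where
  "cfun \<alpha> t = (\<Prod>\<beta>\<in>UNIV - {\<alpha>}. t $ \<beta>)"

definition posorth :: "(real^'m) set" where
  "posorth = {t. \<forall>i. 0 < t $ i}"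

end

theory Submission
  imports Defs
begin

text \<open>
  Fix two directions \<open>\<alpha> \<noteq> \<beta>\<close> and move \<open>t\<close> along the hyperbola \<open>t\<^sup>\<alpha> t\<^sup>\<beta> = const\<close>,
  keeping the other coordinates fixed. Since \<open>t\<^sup>\<alpha> c\<^sub>\<alpha>(t) = v\<close> for every \<open>\<alpha>\<close>, the
  equations give \<open>t\<^sup>\<alpha> \<partial>\<^sub>\<alpha>f = v/2 \<cdot> \<Delta>\<^sub>xf = t\<^sup>\<beta> \<partial>\<^sub>\<beta>f\<close>, which says exactly that the
  derivative of \<open>f\<close> along the hyperbola vanishes. Such transfers preserve \<open>v\<close>, and finitely
  many of them move all of \<open>v\<close> into one coordinate \<open>\<alpha>\<^sub>0\<close> while setting the others to \<open>1\<close>.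
\<close>

lemma vupd_nth [simp]: "vupd v i s $ j = (if j = i then s else v $ j)"
  by (simp add: vupd_def)

lemma vupd_nth_self [simp]: "vupd v i (v $ i) = v"
  by (simp add: vec_eq_iff)

lemma vupd_vupd_same [simp]: "vupd (vupd v i a) i b = vupd v i b"
  by (simp add: vec_eq_iff)

lemma vupd_vupd_swap: "\<alpha> \<noteq> \<beta> \<Longrightarrow> vupd (vupd (vupd t \<alpha> u) \<beta> w) \<alpha> s = vupd (vupd t \<alpha> s) \<beta> w"
  by (simp add: vec_eq_iff)

lemma continuous_on_vupd_vupd:
  "continuous_on S (\<lambda>(a::real, b). vupd (vupd t \<alpha> a) \<beta> b)"
proof -
  have "(\<lambda>(a, b). vupd (vupd t \<alpha> a) \<beta> b) =
        (\<lambda>p. \<chi> j. if j = \<beta> then snd p else if j = \<alpha> then fst p else t $ j)"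
    by (auto simp: vec_eq_iff)
  moreover have "continuous_on S (\<lambda>p. \<chi> j. if j = \<beta> then snd p else if j = \<alpha> then fst p else t $ j)"
  proof (intro continuous_on_vec_lambda)
    fix j
    show "continuous_on S (\<lambda>p. if j = \<beta> then snd p else if j = \<alpha> then fst p else t $ j)"
      by (cases "j = \<beta>"; cases "j = \<alpha>") (auto intro!: continuous_intros)
  qed
  ultimately show ?thesis by simp
qed

lemma prod_eq_coord_mult_cfun: "(\<Prod>i\<in>UNIV. t $ i) = t $ \<alpha> * cfun \<alpha> t"
  unfolding cfun_def by (rule prod.remove) auto

lemma prod_vupd_vupd:
  fixes t :: "real^'m"
  assumes "\<alpha> \<noteq> \<beta>"
  shows "(\<Prod>i\<in>UNIV. vupd (vupd t \<alpha> u) \<beta> w $ i) = u * w * (\<Prod>i\<in>UNIV - {\<alpha>, \<beta>}. t $ i)"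
proof -
  have "(\<Prod>i\<in>UNIV. vupd (vupd t \<alpha> u) \<beta> w $ i) = u * (w * (\<Prod>i\<in>UNIV - {\<alpha>} - {\<beta>}. t $ i))"
    using assms by (simp add: prod.remove[of UNIV \<alpha>] prod.remove[of "UNIV - {\<alpha>}" \<beta>])
  moreover have "UNIV - {\<alpha>} - {\<beta>} = UNIV - {\<alpha>, \<beta>}" by auto
  ultimately show ?thesis by (simp add: mult.assoc)
qed

lemma prod_vupd_vupd_eq:
  fixes t :: "real^'m"
  assumes "\<alpha> \<noteq> \<beta>" "u * w = t $ \<alpha> * t $ \<beta>"
  shows "(\<Prod>i\<in>UNIV. vupd (vupd t \<alpha> u) \<beta> w $ i) = (\<Prod>i\<in>UNIV. t $ i)"
  using prod_vupd_vupd[OF assms(1), of t u w] prod_vupd_vupd[OF assms(1), of t "t $ \<alpha>" "t $ \<beta>"]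
  by (simp add: vec_eq_iff assms(2))

lemma has_derivative_quadrant_partials:
  fixes g g\<^sub>1 g\<^sub>2 :: "real \<Rightarrow> real \<Rightarrow> real"
  assumes d1: "\<And>a b. a > 0 \<Longrightarrow> b > 0 \<Longrightarrow> ((\<lambda>s. g s b) has_real_derivative g\<^sub>1 a b) (at a)"
    and d2: "\<And>a b. a > 0 \<Longrightarrow> b > 0 \<Longrightarrow> ((\<lambda>s. g a s) has_real_derivative g\<^sub>2 a b) (at b)"
    and cont2: "continuous_on ({0<..} \<times> {0<..}) (\<lambda>(a, b). g\<^sub>2 a b)"
    and "u > 0" "w > 0"
  shows "((\<lambda>(a, b). g a b) has_derivative (\<lambda>(h, k). g\<^sub>1 u w * h + g\<^sub>2 u w * k)) (at (u, w))"
proof -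
  let ?Q = "{0<..} :: real set"
  have "continuous_on (?Q \<times> ?Q) (blinfun_mult_right \<circ> (\<lambda>(a, b). g\<^sub>2 a b))"
    by (intro continuous_on_compose cont2 linear_continuous_on bounded_linear_blinfun_mult_right)
  then have "continuous (at (u, w) within ?Q \<times> ?Q) (\<lambda>(a, b). blinfun_mult_right (g\<^sub>2 a b))"
    using \<open>u > 0\<close> \<open>w > 0\<close> by (simp add: continuous_on_eq_continuous_within o_def split_beta')
  then have "((\<lambda>(a, b). g a b) has_derivative
      (\<lambda>(h, k). g\<^sub>1 u w * h + blinfun_mult_right (g\<^sub>2 u w) k)) (at (u, w) within ?Q \<times> ?Q)"
    using d1 d2 \<open>u > 0\<close> \<open>w > 0\<close>
    by (intro has_derivative_partialsI)
       (auto simp: has_field_derivative_def intro: has_derivative_at_withinI)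
  then show ?thesis
    using at_within_open[of "(u, w)" "?Q \<times> ?Q"] \<open>u > 0\<close> \<open>w > 0\<close> by (simp add: open_Times)
qed

lemma constant_on_hyperbola:
  fixes g g\<^sub>1 g\<^sub>2 :: "real \<Rightarrow> real \<Rightarrow> real"
  assumes d1: "\<And>a b. a > 0 \<Longrightarrow> b > 0 \<Longrightarrow> ((\<lambda>s. g s b) has_real_derivative g\<^sub>1 a b) (at a)"
    and d2: "\<And>a b. a > 0 \<Longrightarrow> b > 0 \<Longrightarrow> ((\<lambda>s. g a s) has_real_derivative g\<^sub>2 a b) (at b)"
    and cont2: "continuous_on ({0<..} \<times> {0<..}) (\<lambda>(a, b). g\<^sub>2 a b)"
    and balance: "\<And>a b. a > 0 \<Longrightarrow> b > 0 \<Longrightarrow> a * g\<^sub>1 a b = b * g\<^sub>2 a b"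
    and pos: "u > 0" "w > 0" "u' > 0" "w' > 0"
    and hyperbola: "u * w = u' * w'"
  shows "g u w = g u' w'"
proof -
  define K where "K = u * w"
  have "K > 0" using pos by (simp add: K_def)
  have stationary: "((\<lambda>a. g a (K / a)) has_field_derivative 0) (at a within {0<..})"
    if "a > 0" for a
  proof -
    have "((\<lambda>s. K / s) has_real_derivative - (K / a\<^sup>2)) (at a)"
      using \<open>a > 0\<close> by (auto intro!: derivative_eq_intros simp: power2_eq_square)
    then have "((\<lambda>s. (s, K / s)) has_derivative (\<lambda>h. (h, - (K / a\<^sup>2) * h))) (at a)"
      unfolding has_field_derivative_def by (rule has_derivative_Pair[OF has_derivative_ident])
    from has_derivative_compose[OF this has_derivative_quadrant_partials[OF d1 d2 cont2]]
    have "((\<lambda>s. g s (K / s)) has_derivative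
        (\<lambda>h. g\<^sub>1 a (K / a) * h + g\<^sub>2 a (K / a) * (- (K / a\<^sup>2) * h))) (at a)"
      using \<open>a > 0\<close> \<open>K > 0\<close> by simp
    moreover have "g\<^sub>1 a (K / a) = g\<^sub>2 a (K / a) * (K / a\<^sup>2)"
      using balance[of a "K / a"] \<open>a > 0\<close> \<open>K > 0\<close>
      by (simp add: power2_eq_square divide_simps) (simp add: mult.commute)
    ultimately have "((\<lambda>s. g s (K / s)) has_derivative (\<lambda>h. 0)) (at a)"
      by (simp add: algebra_simps)
    then show ?thesis
      unfolding has_field_derivative_def lambda_zero by (rule has_derivative_at_withinI)
  qed
  obtain c where "\<And>a. a > 0 \<Longrightarrow> g a (K / a) = c"
    using has_field_derivative_zero_constant[OF convex_real_interval(3) stationary] by auto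
  moreover have "K / u = w"
    using pos by (simp add: K_def)
  moreover have "K / u' = w'"
    using pos hyperbola by (simp add: K_def)
  ultimately show ?thesis
    using pos by metis
qed

lemma transfer_invariant_of_pde:
  fixes f :: "real^'m \<Rightarrow> real^'d \<Rightarrow> real"
    and Dt :: "'m \<Rightarrow> real^'m \<Rightarrow> real^'d \<Rightarrow> real"
  assumes dt: "\<And>\<alpha> t x. t \<in> posorth \<Longrightarrow>
               ((\<lambda>s. f (vupd t \<alpha> s) x) has_real_derivative Dt \<alpha> t x) (at (t $ \<alpha>))"
    and dt_cont: "\<And>\<alpha>. continuous_on (posorth \<times> UNIV) (\<lambda>(t, x). Dt \<alpha> t x)"
    and pde: "\<And>\<alpha> t x. t \<in> posorth \<Longrightarrow> Dt \<alpha> t x = cfun \<alpha> t * L t x"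
    and "t \<in> posorth" "\<alpha> \<noteq> \<beta>" "u > 0" "w > 0" "u * w = t $ \<alpha> * t $ \<beta>"
  shows "f (vupd (vupd t \<alpha> u) \<beta> w) x = f t x"
proof -
  define P where "P = (\<lambda>a b. vupd (vupd t \<alpha> a) \<beta> b)"
  have P_pos: "P a b \<in> posorth" if "a > 0" "b > 0" for a b
    using that \<open>t \<in> posorth\<close> by (simp add: posorth_def P_def)
  have P_nth: "P a b $ \<alpha> = a" "P a b $ \<beta> = b" for a b
    using \<open>\<alpha> \<noteq> \<beta>\<close> by (simp_all add: P_def)
  have P_upd: "vupd (P a b) \<alpha> s = P s b" "vupd (P a b) \<beta> s = P a s" for a b s
    using \<open>\<alpha> \<noteq> \<beta>\<close> by (simp_all add: P_def vupd_vupd_swap)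
  have d1: "((\<lambda>s. f (P s b) x) has_real_derivative Dt \<alpha> (P a b) x) (at a)"
    if "a > 0" "b > 0" for a b
    using dt[OF P_pos[OF that], of \<alpha> x] by (simp only: P_upd P_nth)
  have d2: "((\<lambda>s. f (P a s) x) has_real_derivative Dt \<beta> (P a b) x) (at b)"
    if "a > 0" "b > 0" for a b
    using dt[OF P_pos[OF that], of \<beta> x] by (simp only: P_upd P_nth)
  have "continuous_on ({0<..} \<times> {0<..}) ((\<lambda>(t, x). Dt \<beta> t x) \<circ> (\<lambda>(a, b). (P a b, x)))"
  proof (rule continuous_on_compose)
    show "continuous_on ({0<..} \<times> {0<..}) (\<lambda>(a, b). (P a b, x))"
      using continuous_on_vupd_vupd[of _ t \<alpha> \<beta>]
      by (auto intro!: continuous_intros simp: split_beta P_def)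
    show "continuous_on ((\<lambda>(a, b). (P a b, x)) ` ({0<..} \<times> {0<..})) (\<lambda>(t, x). Dt \<beta> t x)"
      by (rule continuous_on_subset[OF dt_cont]) (auto intro: P_pos)
  qed
  then have cont2: "continuous_on ({0<..} \<times> {0<..}) (\<lambda>(a, b). Dt \<beta> (P a b) x)"
    by (simp add: o_def split_beta')
  have balance: "a * Dt \<alpha> (P a b) x = b * Dt \<beta> (P a b) x" if "a > 0" "b > 0" for a b
  proof -
    have "a * cfun \<alpha> (P a b) = b * cfun \<beta> (P a b)"
      using prod_eq_coord_mult_cfun[of "P a b" \<alpha>] prod_eq_coord_mult_cfun[of "P a b" \<beta>]
      by (simp only: P_nth)
    then show ?thesis
      by (simp only: pde[OF P_pos[OF that]] mult.assoc[symmetric])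
  qed
  have "t $ \<alpha> > 0" "t $ \<beta> > 0"
    using \<open>t \<in> posorth\<close> by (simp_all add: posorth_def)
  with constant_on_hyperbola[where g = "\<lambda>a b. f (P a b) x", OF d1 d2 cont2 balance] assms(6-)
  have "f (P u w) x = f (P (t $ \<alpha>) (t $ \<beta>)) x"
    by blast
  then show ?thesis by (simp add: P_def vec_eq_iff)
qed

lemma transfer_invariant_depends_on_prod:
  fixes F :: "real^'m \<Rightarrow> 'a"
  assumes transfer: "\<And>t \<alpha> \<beta> u w. t \<in> posorth \<Longrightarrow> \<alpha> \<noteq> \<beta> \<Longrightarrow> u > 0 \<Longrightarrow> w > 0 \<Longrightarrow>
             u * w = t $ \<alpha> * t $ \<beta> \<Longrightarrow> F (vupd (vupd t \<alpha> u) \<beta> w) = F t"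
    and "t \<in> posorth"
  shows "F t = F (vupd 1 \<alpha>\<^sub>0 (\<Prod>i\<in>UNIV. t $ i))"
proof -
  have "F t = F (vupd 1 \<alpha>\<^sub>0 (\<Prod>i\<in>UNIV. t $ i))"
    if "t \<in> posorth" "card {i. i \<noteq> \<alpha>\<^sub>0 \<and> t $ i \<noteq> 1} = n" for n t
    using that
  proof (induction n arbitrary: t)
    case 0
    then have "t $ i = 1" if "i \<noteq> \<alpha>\<^sub>0" for i
      using that by auto
    then have "vupd 1 \<alpha>\<^sub>0 (\<Prod>i\<in>UNIV. t $ i) = t"
      using prod_eq_coord_mult_cfun[of t \<alpha>\<^sub>0] by (simp add: vec_eq_iff cfun_def)
    then show ?case by simp
  next
    case (Suc n)
    then have "{i. i \<noteq> \<alpha>\<^sub>0 \<and> t $ i \<noteq> 1} \<noteq> {}"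
      by (intro notI) simp
    then obtain \<beta> where \<beta>: "\<beta> \<noteq> \<alpha>\<^sub>0" "t $ \<beta> \<noteq> 1"
      by blast
    define t' where "t' = vupd (vupd t \<alpha>\<^sub>0 (t $ \<alpha>\<^sub>0 * t $ \<beta>)) \<beta> 1"
    have "t' \<in> posorth"
      using \<open>t \<in> posorth\<close> by (simp add: posorth_def t'_def)
    have "{i. i \<noteq> \<alpha>\<^sub>0 \<and> t' $ i \<noteq> 1} = {i. i \<noteq> \<alpha>\<^sub>0 \<and> t $ i \<noteq> 1} - {\<beta>}"
      using \<beta> by (auto simp: t'_def)
    then have "card {i. i \<noteq> \<alpha>\<^sub>0 \<and> t' $ i \<noteq> 1} = n"
      using Suc.prems(2) \<beta> by (simp add: card_Diff_singleton)
    have "t $ \<alpha>\<^sub>0 > 0" "t $ \<beta> > 0"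
      using \<open>t \<in> posorth\<close> by (simp_all add: posorth_def)
    then have "F t' = F t"
      unfolding t'_def using \<open>t \<in> posorth\<close> \<beta>(1) by (intro transfer) auto
    moreover have "(\<Prod>i\<in>UNIV. t' $ i) = (\<Prod>i\<in>UNIV. t $ i)"
      unfolding t'_def using \<beta>(1) by (intro prod_vupd_vupd_eq) auto
    ultimately show ?case
      using Suc.IH[OF \<open>t' \<in> posorth\<close>] \<open>card {i. i \<noteq> \<alpha>\<^sub>0 \<and> t' $ i \<noteq> 1} = n\<close> by simp
  qed
  then show ?thesis using \<open>t \<in> posorth\<close> by blast
qed

theorem mainTheorem1:
  fixes f :: "real^'m \<Rightarrow> real^'d \<Rightarrow> real"
    and Dt :: "'m \<Rightarrow> real^'m \<Rightarrow> real^'d \<Rightarrow> real"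
    and Dx :: "'d \<Rightarrow> real^'m \<Rightarrow> real^'d \<Rightarrow> real"
    and Dxx :: "'d \<Rightarrow> 'd \<Rightarrow> real^'m \<Rightarrow> real^'d \<Rightarrow> real"
  assumes zero: "\<And>t. t \<in> posorth \<Longrightarrow> f t 0 = 0"
    and dt: "\<And>\<alpha> t x. t \<in> posorth \<Longrightarrow>
               ((\<lambda>s. f (vupd t \<alpha> s) x) has_real_derivative Dt \<alpha> t x) (at (t $ \<alpha>))"
    and dt_cont: "\<And>\<alpha>. continuous_on (posorth \<times> UNIV) (\<lambda>(t, x). Dt \<alpha> t x)"
    and dx: "\<And>a t x. t \<in> posorth \<Longrightarrow>
               ((\<lambda>s. f t (vupd x a s)) has_real_derivative Dx a t x) (at (x $ a))"
    and dxx: "\<And>a b t x. t \<in> posorth \<Longrightarrow>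
               ((\<lambda>s. Dx a t (vupd x b s)) has_real_derivative Dxx a b t x) (at (x $ b))"
    and dxx_cont: "\<And>a b. continuous_on (posorth \<times> UNIV) (\<lambda>(t, x). Dxx a b t x)"
    and pde: "\<And>\<alpha> t x. t \<in> posorth \<Longrightarrow>
               Dt \<alpha> t x - 1/2 * cfun \<alpha> t * (\<Sum>a\<in>UNIV. Dxx a a t x) = 0"
  shows "\<exists>\<phi> :: real \<Rightarrow> real^'d \<Rightarrow> real.
           \<forall>t \<in> posorth. \<forall>x. f t x = \<phi> (\<Prod>\<alpha>\<in>UNIV. t $ \<alpha>) x"
proof -
  fix \<alpha>\<^sub>0 :: 'm
  have heat: "Dt \<alpha> t x = cfun \<alpha> t * (1/2 * (\<Sum>a\<in>UNIV. Dxx a a t x))"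
    if "t \<in> posorth" for \<alpha> t x
    using pde[OF that] by simp
  have "f t x = f (vupd 1 \<alpha>\<^sub>0 (\<Prod>i\<in>UNIV. t $ i)) x" if "t \<in> posorth" for t x
    by (rule transfer_invariant_depends_on_prod[where F = "\<lambda>t. f t x", OF _ that])
       (rule transfer_invariant_of_pde[OF dt dt_cont heat])
  then show ?thesis
    by (intro exI[of _ "\<lambda>v x. f (vupd 1 \<alpha>\<^sub>0 v) x"]) blast
qed

end
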